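(* Let $\mathcal{A}$ be an abelian category. (1) Let $0\to N_1\to N\to N_2\to 0$ be a short exact sequence and $M$ an object of $\mathcal{A}$ such that $N_1$ and $N_2$ are strongly $M$-Rickart. Then $N$ is strongly $M$-Rickart. (2) Let $0\to M_1\to M\to M_2\to 0$ be a short exact sequence and $N$ an object of $\mathcal{A}$ such that $N$ is dual strongly $M_1$-Rickart and dual strongly $M_2$-Rickart. Then $N$ is dual strongly $M$-Rickart.
   Context: A morphism $f:X\to Y$ is a section if $f'f=1_X$ for some $f'$, a retraction if $ff'=1_Y$ for some $f'$. A monomorphism $k:K\to X$ is fully invariant if for every $h:X\to X$ there is $\alpha:K\to K$ with $hk=k\alpha$; an epimorphism $c:X\to C$ is fully coinvariant if for every $h:X\to X$ there is $\gamma:C\to C$ with $ch=\gamma c$. For objects $M,N$: $N$ is strongly $M$-Rickart if the kernel of every morphism $f:M\to N$ is a fully invariant section; $N$ is dual strongly $M$-Rickart if the cokernel of every morphism $f:M\to N$ is a fully coinvariant retraction. *)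

theory Defs
  imports Main
begin

text \<open>A category given by a set of objects, a set of morphisms, domain/codomain
maps, composition (Comp g f = g after f) and identities.\<close>

record ('o, 'm) cat =
  Obj :: "'o set"
  Mor :: "'m set"
  Dom :: "'m \<Rightarrow> 'o"
  Cod :: "'m \<Rightarrow> 'o"
  Comp :: "'m \<Rightarrow> 'm \<Rightarrow> 'm"
  Id :: "'o \<Rightarrow> 'm"

definition hom :: "('o, 'm) cat \<Rightarrow> 'o \<Rightarrow> 'o \<Rightarrow> 'm set" where
  "hom C X Y = {f \<in> Mor C. Dom C f = X \<and> Cod C f = Y}"

definition category :: "('o, 'm) cat \<Rightarrow> bool" where
  "category C \<longleftrightarrow>
     (\<forall>f \<in> Mor C. Dom C f \<in> Obj C \<and> Cod C f \<in> Obj C) \<and>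
     (\<forall>X \<in> Obj C. Id C X \<in> hom C X X) \<and>
     (\<forall>f \<in> Mor C. \<forall>g \<in> Mor C. Dom C g = Cod C f \<longrightarrow>
        Comp C g f \<in> hom C (Dom C f) (Cod C g)) \<and>
     (\<forall>f \<in> Mor C. Comp C (Id C (Cod C f)) f = f \<and> Comp C f (Id C (Dom C f)) = f) \<and>
     (\<forall>f \<in> Mor C. \<forall>g \<in> Mor C. \<forall>h \<in> Mor C. Dom C g = Cod C f \<longrightarrow> Dom C h = Cod C g \<longrightarrow>
        Comp C h (Comp C g f) = Comp C (Comp C h g) f)"

definition mono :: "('o, 'm) cat \<Rightarrow> 'm \<Rightarrow> bool" where
  "mono C f \<longleftrightarrow> f \<in> Mor C \<and>
     (\<forall>g \<in> Mor C. \<forall>h \<in> Mor C. Cod C g = Dom C f \<longrightarrow> Cod C h = Dom C f \<longrightarrow>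
        Dom C g = Dom C h \<longrightarrow> Comp C f g = Comp C f h \<longrightarrow> g = h)"

definition epi :: "('o, 'm) cat \<Rightarrow> 'm \<Rightarrow> bool" where
  "epi C f \<longleftrightarrow> f \<in> Mor C \<and>
     (\<forall>g \<in> Mor C. \<forall>h \<in> Mor C. Dom C g = Cod C f \<longrightarrow> Dom C h = Cod C f \<longrightarrow>
        Cod C g = Cod C h \<longrightarrow> Comp C g f = Comp C h f \<longrightarrow> g = h)"

definition zero_obj :: "('o, 'm) cat \<Rightarrow> 'o \<Rightarrow> bool" where
  "zero_obj C Z \<longleftrightarrow> Z \<in> Obj C \<and>
     (\<forall>X \<in> Obj C. (\<exists>!f. f \<in> hom C X Z) \<and> (\<exists>!f. f \<in> hom C Z X))"

definition zero_mor :: "('o, 'm) cat \<Rightarrow> 'm \<Rightarrow> bool" where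
  "zero_mor C f \<longleftrightarrow> f \<in> Mor C \<and>
     (\<exists>Z u v. zero_obj C Z \<and> u \<in> hom C (Dom C f) Z \<and> v \<in> hom C Z (Cod C f) \<and> f = Comp C v u)"

definition is_kernel :: "('o, 'm) cat \<Rightarrow> 'm \<Rightarrow> 'm \<Rightarrow> bool" where
  "is_kernel C k f \<longleftrightarrow> f \<in> Mor C \<and> k \<in> Mor C \<and> Cod C k = Dom C f \<and>
     zero_mor C (Comp C f k) \<and>
     (\<forall>g \<in> Mor C. Cod C g = Dom C f \<longrightarrow> zero_mor C (Comp C f g) \<longrightarrow>
        (\<exists>!u. u \<in> hom C (Dom C g) (Dom C k) \<and> Comp C k u = g))"

definition is_cokernel :: "('o, 'm) cat \<Rightarrow> 'm \<Rightarrow> 'm \<Rightarrow> bool" where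
  "is_cokernel C c f \<longleftrightarrow> f \<in> Mor C \<and> c \<in> Mor C \<and> Dom C c = Cod C f \<and>
     zero_mor C (Comp C c f) \<and>
     (\<forall>g \<in> Mor C. Dom C g = Cod C f \<longrightarrow> zero_mor C (Comp C g f) \<longrightarrow>
        (\<exists>!u. u \<in> hom C (Cod C c) (Cod C g) \<and> Comp C u c = g))"

definition has_binary_products :: "('o, 'm) cat \<Rightarrow> bool" where
  "has_binary_products C \<longleftrightarrow> (\<forall>X \<in> Obj C. \<forall>Y \<in> Obj C. \<exists>P p1 p2.
     p1 \<in> hom C P X \<and> p2 \<in> hom C P Y \<and>
     (\<forall>W \<in> Obj C. \<forall>f1 \<in> hom C W X. \<forall>f2 \<in> hom C W Y.
        \<exists>!u. u \<in> hom C W P \<and> Comp C p1 u = f1 \<and> Comp C p2 u = f2))"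

definition has_binary_coproducts :: "('o, 'm) cat \<Rightarrow> bool" where
  "has_binary_coproducts C \<longleftrightarrow> (\<forall>X \<in> Obj C. \<forall>Y \<in> Obj C. \<exists>S i1 i2.
     i1 \<in> hom C X S \<and> i2 \<in> hom C Y S \<and>
     (\<forall>W \<in> Obj C. \<forall>f1 \<in> hom C X W. \<forall>f2 \<in> hom C Y W.
        \<exists>!u. u \<in> hom C S W \<and> Comp C u i1 = f1 \<and> Comp C u i2 = f2))"

text \<open>Abelian category (Freyd's definition): a category with a zero object, binary
products and coproducts, kernels and cokernels of all morphisms, in which every
monomorphism is a kernel and every epimorphism is a cokernel.\<close>
definition abelian :: "('o, 'm) cat \<Rightarrow> bool" where
  "abelian C \<longleftrightarrow> category C \<and> (\<exists>Z. zero_obj C Z) \<and>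
     has_binary_products C \<and> has_binary_coproducts C \<and>
     (\<forall>f \<in> Mor C. \<exists>k. is_kernel C k f) \<and>
     (\<forall>f \<in> Mor C. \<exists>c. is_cokernel C c f) \<and>
     (\<forall>f. mono C f \<longrightarrow> (\<exists>g. is_kernel C f g)) \<and>
     (\<forall>f. epi C f \<longrightarrow> (\<exists>g. is_cokernel C f g))"

definition is_section :: "('o, 'm) cat \<Rightarrow> 'm \<Rightarrow> bool" where
  "is_section C f \<longleftrightarrow> f \<in> Mor C \<and>
     (\<exists>f' \<in> hom C (Cod C f) (Dom C f). Comp C f' f = Id C (Dom C f))"

definition is_retraction :: "('o, 'm) cat \<Rightarrow> 'm \<Rightarrow> bool" where
  "is_retraction C f \<longleftrightarrow> f \<in> Mor C \<and>
     (\<exists>f' \<in> hom C (Cod C f) (Dom C f). Comp C f f' = Id C (Cod C f))"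

definition fully_invariant :: "('o, 'm) cat \<Rightarrow> 'm \<Rightarrow> bool" where
  "fully_invariant C k \<longleftrightarrow> mono C k \<and>
     (\<forall>h \<in> hom C (Cod C k) (Cod C k). \<exists>\<alpha> \<in> hom C (Dom C k) (Dom C k).
        Comp C h k = Comp C k \<alpha>)"

definition fully_coinvariant :: "('o, 'm) cat \<Rightarrow> 'm \<Rightarrow> bool" where
  "fully_coinvariant C c \<longleftrightarrow> epi C c \<and>
     (\<forall>h \<in> hom C (Dom C c) (Dom C c). \<exists>\<gamma> \<in> hom C (Cod C c) (Cod C c).
        Comp C c h = Comp C \<gamma> c)"

definition strongly_rickart :: "('o, 'm) cat \<Rightarrow> 'o \<Rightarrow> 'o \<Rightarrow> bool" where
  "strongly_rickart C M N \<longleftrightarrow> (\<forall>f \<in> hom C M N. \<forall>k. is_kernel C k f \<longrightarrow>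
     fully_invariant C k \<and> is_section C k)"

definition dual_strongly_rickart :: "('o, 'm) cat \<Rightarrow> 'o \<Rightarrow> 'o \<Rightarrow> bool" where
  "dual_strongly_rickart C M N \<longleftrightarrow> (\<forall>f \<in> hom C M N. \<forall>c. is_cokernel C c f \<longrightarrow>
     fully_coinvariant C c \<and> is_retraction C c)"

definition short_exact :: "('o, 'm) cat \<Rightarrow> 'm \<Rightarrow> 'm \<Rightarrow> bool" where
  "short_exact C a b \<longleftrightarrow> a \<in> Mor C \<and> b \<in> Mor C \<and> Cod C a = Dom C b \<and>
     mono C a \<and> epi C b \<and> is_kernel C a b"

end

theory Submission
  imports Defs
begin

(* Let a : N1 -> N be a kernel of b : N -> N2 and f : M -> N. The kernel k1 of b f : M -> N2
   is a fully invariant section with retraction r1, and f k1 factors through a, which yields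
   g : M -> N1 with f (k1 r1) = a g; the kernel k2 of g is again a fully invariant section.
   Since a is mono, a morphism into M is killed by f exactly when it factors through both k1
   and k2. Hence h k is killed by f for every endomorphism h of M, so ker f = k is fully
   invariant; and (k1 r1)(k2 r2) is an endomorphism of M killed by f that fixes k, so k is a
   section. Part (2) is part (1) in the opposite category, in which the cokernel b of a is a
   kernel of a. *)

lemma hom_iff: "f \<in> hom C X Y \<longleftrightarrow> f \<in> Mor C \<and> Dom C f = X \<and> Cod C f = Y"
  by (simp add: hom_def)

lemma zero_morI:
  assumes "zero_obj C Z" "u \<in> hom C X Z" "v \<in> hom C Z Y" "Comp C v u \<in> hom C X Y"
  shows "zero_mor C (Comp C v u)"
  using assms unfolding zero_mor_def hom_iff by metis

lemma zero_morE:
  assumes "zero_mor C f" "f \<in> hom C X Y"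
  obtains Z u v where "zero_obj C Z" "u \<in> hom C X Z" "v \<in> hom C Z Y" "f = Comp C v u"
  using assms unfolding zero_mor_def hom_def by blast

lemma zero_obj_hom_to_exists:
  "zero_obj C Z \<Longrightarrow> X \<in> Obj C \<Longrightarrow> \<exists>u. u \<in> hom C X Z"
  unfolding zero_obj_def by auto

lemma zero_obj_hom_from_exists:
  "zero_obj C Z \<Longrightarrow> X \<in> Obj C \<Longrightarrow> \<exists>u. u \<in> hom C Z X"
  unfolding zero_obj_def by auto

lemma zero_obj_hom_to_unique:
  "zero_obj C Z \<Longrightarrow> X \<in> Obj C \<Longrightarrow> u \<in> hom C X Z \<Longrightarrow> u' \<in> hom C X Z \<Longrightarrow> u = u'"
  unfolding zero_obj_def by blast

lemma zero_obj_hom_from_unique: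
  "zero_obj C Z \<Longrightarrow> X \<in> Obj C \<Longrightarrow> u \<in> hom C Z X \<Longrightarrow> u' \<in> hom C Z X \<Longrightarrow> u = u'"
  unfolding zero_obj_def by blast

lemma mono_cancel:
  "mono C a \<Longrightarrow> a \<in> hom C Y W \<Longrightarrow> g \<in> hom C X Y \<Longrightarrow> h \<in> hom C X Y \<Longrightarrow>
    Comp C a g = Comp C a h \<Longrightarrow> g = h"
  unfolding mono_def hom_def by auto

lemma kernel_hom: "is_kernel C k f \<Longrightarrow> f \<in> hom C X Y \<Longrightarrow> k \<in> hom C (Dom C k) X"
  unfolding is_kernel_def hom_def by simp

lemma kernel_zero: "is_kernel C k f \<Longrightarrow> zero_mor C (Comp C f k)"
  unfolding is_kernel_def by blast

lemma kernel_factors_uniquely: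
  assumes "is_kernel C k f" "f \<in> hom C X Y" "x \<in> hom C W X" "zero_mor C (Comp C f x)"
  shows "\<exists>!w. w \<in> hom C W (Dom C k) \<and> Comp C k w = x"
proof -
  have "x \<in> Mor C" "Cod C x = Dom C f" "Dom C x = W" using assms(2,3) by (simp_all add: hom_def)
  then show ?thesis using assms(1,4) unfolding is_kernel_def by metis
qed

definition factors_through :: "('o, 'm) cat \<Rightarrow> 'm \<Rightarrow> 'm \<Rightarrow> bool" where
  "factors_through C k x \<longleftrightarrow> (\<exists>w \<in> hom C (Dom C x) (Dom C k). Comp C k w = x)"

locale category_with_zero =
  fixes C :: "('o, 'm) cat"
  assumes category: "category C"
    and zero_obj_exists: "\<exists>Z. zero_obj C Z"
begin

abbreviation comp :: "'m \<Rightarrow> 'm \<Rightarrow> 'm"  (infixr "\<cdot>" 55)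
  where "g \<cdot> f \<equiv> Comp C g f"

lemma comp_hom: "f \<in> hom C X Y \<Longrightarrow> g \<in> hom C Y Z \<Longrightarrow> g \<cdot> f \<in> hom C X Z"
  using category unfolding category_def hom_iff by metis

lemma id_hom: "X \<in> Obj C \<Longrightarrow> Id C X \<in> hom C X X"
  using category unfolding category_def by blast

lemma hom_dom_obj: "f \<in> hom C X Y \<Longrightarrow> X \<in> Obj C"
  using category unfolding category_def hom_iff by blast

lemma hom_cod_obj: "f \<in> hom C X Y \<Longrightarrow> Y \<in> Obj C"
  using category unfolding category_def hom_iff by blast

lemma comp_id_left: "f \<in> hom C X Y \<Longrightarrow> Id C Y \<cdot> f = f"
  using category unfolding category_def hom_iff by metis

lemma comp_id_right: "f \<in> hom C X Y \<Longrightarrow> f \<cdot> Id C X = f"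
  using category unfolding category_def hom_iff by metis

lemma comp_assoc:
  "f \<in> hom C X Y \<Longrightarrow> g \<in> hom C Y Z \<Longrightarrow> h \<in> hom C Z W \<Longrightarrow> h \<cdot> (g \<cdot> f) = (h \<cdot> g) \<cdot> f"
  using category unfolding category_def hom_iff by metis

lemma zero_mor_comp_left:
  assumes "zero_mor C f" "f \<in> hom C X Y" "g \<in> hom C Y W"
  shows "zero_mor C (g \<cdot> f)"
proof -
  obtain Z u v where Z: "zero_obj C Z" and u: "u \<in> hom C X Z" and v: "v \<in> hom C Z Y"
    and f: "f = v \<cdot> u"
    using zero_morE[OF assms(1,2)] .
  have "g \<cdot> f = (g \<cdot> v) \<cdot> u" using comp_assoc[OF u v assms(3)] f by simp
  then show ?thesis
    using zero_morI[OF Z u comp_hom[OF v assms(3)]] comp_hom[OF assms(2,3)] by simp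
qed

lemma zero_mor_comp_right:
  assumes "zero_mor C f" "f \<in> hom C X Y" "g \<in> hom C W X"
  shows "zero_mor C (f \<cdot> g)"
proof -
  obtain Z u v where Z: "zero_obj C Z" and u: "u \<in> hom C X Z" and v: "v \<in> hom C Z Y"
    and f: "f = v \<cdot> u"
    using zero_morE[OF assms(1,2)] .
  have "f \<cdot> g = v \<cdot> (u \<cdot> g)" using comp_assoc[OF assms(3) u v] f by simp
  then show ?thesis
    using zero_morI[OF Z comp_hom[OF assms(3) u] v] comp_hom[OF assms(3,2)] by simp
qed

lemma zero_mor_unique:
  assumes "zero_mor C f" "zero_mor C g" "f \<in> hom C X Y" "g \<in> hom C X Y"
  shows "f = g"
proof -
  obtain Z u v where Z: "zero_obj C Z" and u: "u \<in> hom C X Z" and v: "v \<in> hom C Z Y"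
    and f: "f = v \<cdot> u"
    using zero_morE[OF assms(1,3)] .
  obtain Z' u' v' where Z': "zero_obj C Z'" and u': "u' \<in> hom C X Z'" and v': "v' \<in> hom C Z' Y"
    and g: "g = v' \<cdot> u'"
    using zero_morE[OF assms(2,4)] .
  obtain w where w: "w \<in> hom C Z Z'"
    using zero_obj_hom_to_exists[OF Z' hom_cod_obj[OF u]] by blast
  have "w \<cdot> u = u'"
    by (rule zero_obj_hom_to_unique[OF Z' hom_dom_obj[OF u] comp_hom[OF u w] u'])
  moreover have "v' \<cdot> w = v"
    by (rule zero_obj_hom_from_unique[OF Z hom_cod_obj[OF v] comp_hom[OF w v'] v])
  ultimately show ?thesis
    using comp_assoc[OF u w v'] f g by simp
qed

lemma zero_mor_exists:
  assumes "X \<in> Obj C" "Y \<in> Obj C"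
  obtains z where "z \<in> hom C X Y" "zero_mor C z"
proof -
  obtain Z where Z: "zero_obj C Z" using zero_obj_exists ..
  obtain u v where u: "u \<in> hom C X Z" and v: "v \<in> hom C Z Y"
    using zero_obj_hom_to_exists[OF Z assms(1)] zero_obj_hom_from_exists[OF Z assms(2)] by blast
  show ?thesis using that zero_morI[OF Z u v] comp_hom[OF u v] by blast
qed

lemma mono_cancel_zero:
  assumes "mono C a" "a \<in> hom C Y W" "g \<in> hom C X Y" "zero_mor C (a \<cdot> g)"
  shows "zero_mor C g"
proof -
  obtain z where z: "z \<in> hom C X Y" "zero_mor C z"
    using zero_mor_exists[OF hom_dom_obj[OF assms(3)] hom_cod_obj[OF assms(3)]] .
  have "a \<cdot> g = a \<cdot> z"
    using zero_mor_unique[OF assms(4) zero_mor_comp_left[OF z(2,1) assms(2)]]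
      comp_hom[OF assms(3,2)] comp_hom[OF z(1) assms(2)] by blast
  then have "g = z"
    using mono_cancel[OF assms(1-3) z(1)] by blast
  with z show ?thesis by simp
qed

lemma kernel_factors:
  assumes "is_kernel C k f" "f \<in> hom C X Y" "x \<in> hom C W X" "zero_mor C (f \<cdot> x)"
  obtains w where "w \<in> hom C W (Dom C k)" "k \<cdot> w = x"
  using kernel_factors_uniquely[OF assms] by blast

lemma kernel_mono:
  assumes k: "is_kernel C k f" and f: "f \<in> hom C X Y"
  shows "mono C k"
  unfolding mono_def
proof (intro conjI ballI impI)
  have kh: "k \<in> hom C (Dom C k) X" using kernel_hom[OF k f] .
  then show "k \<in> Mor C" by (simp add: hom_def)
  fix g h assume "g \<in> Mor C" "h \<in> Mor C" "Cod C g = Dom C k" "Cod C h = Dom C k"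
    "Dom C g = Dom C h" and e: "k \<cdot> g = k \<cdot> h"
  then have g: "g \<in> hom C (Dom C g) (Dom C k)" and h: "h \<in> hom C (Dom C g) (Dom C k)"
    by (simp_all add: hom_def)
  have "zero_mor C ((f \<cdot> k) \<cdot> g)"
    using zero_mor_comp_right[OF kernel_zero[OF k] comp_hom[OF kh f] g] .
  then have "zero_mor C (f \<cdot> (k \<cdot> g))" using comp_assoc[OF g kh f] by simp
  then have "\<exists>!u. u \<in> hom C (Dom C g) (Dom C k) \<and> k \<cdot> u = k \<cdot> g"
    using kernel_factors_uniquely[OF k f comp_hom[OF g kh]] by blast
  then show "g = h" using g h e by metis
qed

lemma factors_through_kernel_iff:
  assumes k: "is_kernel C k f" and f: "f \<in> hom C X Y" and x: "x \<in> hom C W X"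
  shows "factors_through C k x \<longleftrightarrow> zero_mor C (f \<cdot> x)"
proof
  assume "factors_through C k x"
  then obtain w where w: "w \<in> hom C W (Dom C k)" and xw: "k \<cdot> w = x"
    using x unfolding factors_through_def hom_def by auto
  have kh: "k \<in> hom C (Dom C k) X" using kernel_hom[OF k f] .
  have "zero_mor C ((f \<cdot> k) \<cdot> w)"
    using zero_mor_comp_right[OF kernel_zero[OF k] comp_hom[OF kh f] w] .
  then show "zero_mor C (f \<cdot> x)" using comp_assoc[OF w kh f] xw by simp
next
  assume "zero_mor C (f \<cdot> x)"
  then show "factors_through C k x"
    using kernel_factors[OF k f x] x unfolding factors_through_def hom_def by auto
qed

lemma fully_invariant_factors_through_comp:
  assumes fi: "fully_invariant C k" and k: "k \<in> hom C K X" and h: "h \<in> hom C X X"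
    and x: "x \<in> hom C W X" and kx: "factors_through C k x"
  shows "factors_through C k (h \<cdot> x)"
proof -
  obtain w where w: "w \<in> hom C W K" and xw: "k \<cdot> w = x"
    using kx k x unfolding factors_through_def hom_def by auto
  obtain \<alpha> where \<alpha>: "\<alpha> \<in> hom C K K" and h\<alpha>: "h \<cdot> k = k \<cdot> \<alpha>"
    using fi k h unfolding fully_invariant_def hom_def by auto
  have "h \<cdot> x = k \<cdot> (\<alpha> \<cdot> w)"
    using comp_assoc[OF w k h] comp_assoc[OF w \<alpha> k] h\<alpha> xw by simp
  then show ?thesis
    using comp_hom[OF w \<alpha>] comp_hom[OF x h] k unfolding factors_through_def hom_def by auto
qed

lemma retraction_comp_fixes_factors_through:
  assumes k: "k \<in> hom C K X" and r: "r \<in> hom C X K" and rk: "r \<cdot> k = Id C K"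
    and x: "x \<in> hom C W X" and kx: "factors_through C k x"
  shows "(k \<cdot> r) \<cdot> x = x"
proof -
  obtain w where w: "w \<in> hom C W K" and xw: "k \<cdot> w = x"
    using kx k x unfolding factors_through_def hom_def by auto
  have "(k \<cdot> r) \<cdot> x = k \<cdot> ((r \<cdot> k) \<cdot> w)"
    using comp_assoc[OF w k r] comp_assoc[OF comp_hom[OF w k] r k] xw by simp
  also have "\<dots> = x" using rk comp_id_left[OF w] xw by simp
  finally show ?thesis .
qed

lemma kernel_fully_invariantI:
  assumes k: "is_kernel C k f" and f: "f \<in> hom C X Y"
    and killed: "\<And>h. h \<in> hom C X X \<Longrightarrow> zero_mor C (f \<cdot> (h \<cdot> k))"
  shows "fully_invariant C k"
  unfolding fully_invariant_def
proof (intro conjI ballI)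
  show "mono C k" using kernel_mono[OF k f] .
  have kh: "k \<in> hom C (Dom C k) X" using kernel_hom[OF k f] .
  fix h assume "h \<in> hom C (Cod C k) (Cod C k)"
  then have h: "h \<in> hom C X X" using kh by (simp add: hom_def)
  obtain \<alpha> where "\<alpha> \<in> hom C (Dom C k) (Dom C k)" "k \<cdot> \<alpha> = h \<cdot> k"
    using kernel_factors[OF k f comp_hom[OF kh h] killed[OF h]] .
  then show "\<exists>\<alpha> \<in> hom C (Dom C k) (Dom C k). h \<cdot> k = k \<cdot> \<alpha>" by metis
qed

lemma kernel_is_sectionI:
  assumes k: "is_kernel C k f" and f: "f \<in> hom C X Y"
    and e: "e \<in> hom C X X" and fe: "zero_mor C (f \<cdot> e)" and ek: "e \<cdot> k = k"
  shows "is_section C k"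
proof -
  have kh: "k \<in> hom C (Dom C k) X" using kernel_hom[OF k f] .
  obtain p where p: "p \<in> hom C X (Dom C k)" and kp: "k \<cdot> p = e"
    using kernel_factors[OF k f e fe] .
  have "k \<cdot> (p \<cdot> k) = k \<cdot> Id C (Dom C k)"
    using comp_assoc[OF kh p kh] kp ek comp_id_right[OF kh] by simp
  then have "p \<cdot> k = Id C (Dom C k)"
    using mono_cancel[OF kernel_mono[OF k f] kh comp_hom[OF kh p] id_hom[OF hom_dom_obj[OF kh]]]
    by blast
  then show ?thesis using p kh unfolding is_section_def hom_def by auto
qed

lemma zero_comp_iff_factors_through_both:
  assumes ab: "is_kernel C a b" and a: "a \<in> hom C N1 N" and b: "b \<in> hom C N N2"
    and f: "f \<in> hom C M N" and k1: "is_kernel C k1 (b \<cdot> f)" and k1h: "k1 \<in> hom C K1 M"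
    and r1: "r1 \<in> hom C M K1" and r1k1: "r1 \<cdot> k1 = Id C K1"
    and g: "g \<in> hom C M N1" and fk1r1: "f \<cdot> (k1 \<cdot> r1) = a \<cdot> g"
    and k2: "is_kernel C k2 g" and x: "x \<in> hom C W M"
  shows "zero_mor C (f \<cdot> x) \<longleftrightarrow> factors_through C k1 x \<and> factors_through C k2 x"
proof -
  have bf: "b \<cdot> f \<in> hom C M N2" using comp_hom[OF f b] .
  have through_a: "f \<cdot> x = a \<cdot> (g \<cdot> x)" if "factors_through C k1 x"
  proof -
    have "f \<cdot> x = f \<cdot> ((k1 \<cdot> r1) \<cdot> x)"
      using retraction_comp_fixes_factors_through[OF k1h r1 r1k1 x that] by simp
    also have "\<dots> = (a \<cdot> g) \<cdot> x"
      using comp_assoc[OF x comp_hom[OF r1 k1h] f] fk1r1 by simp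
    finally show ?thesis using comp_assoc[OF x g a] by simp
  qed
  show ?thesis
  proof
    assume fx: "zero_mor C (f \<cdot> x)"
    have "zero_mor C ((b \<cdot> f) \<cdot> x)"
      using zero_mor_comp_left[OF fx comp_hom[OF x f] b] comp_assoc[OF x f b] by simp
    then have kx1: "factors_through C k1 x" using factors_through_kernel_iff[OF k1 bf x] by simp
    then have "zero_mor C (a \<cdot> (g \<cdot> x))" using through_a fx by simp
    then have "zero_mor C (g \<cdot> x)"
      using mono_cancel_zero[OF kernel_mono[OF ab b] a comp_hom[OF x g]] by simp
    then show "factors_through C k1 x \<and> factors_through C k2 x"
      using kx1 factors_through_kernel_iff[OF k2 g x] by simp
  next
    assume "factors_through C k1 x \<and> factors_through C k2 x"
    then have "f \<cdot> x = a \<cdot> (g \<cdot> x)" "zero_mor C (g \<cdot> x)"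
      using through_a factors_through_kernel_iff[OF k2 g x] by simp_all
    then show "zero_mor C (f \<cdot> x)" using zero_mor_comp_left[OF _ comp_hom[OF x g] a] by simp
  qed
qed

lemma cokernel_of_kernel:
  assumes ab: "is_kernel C a b" and bg: "is_cokernel C b g"
  shows "is_cokernel C b a"
  unfolding is_cokernel_def
proof (intro conjI ballI impI)
  have b: "b \<in> hom C (Cod C a) (Cod C b)" and a: "a \<in> hom C (Dom C a) (Cod C a)"
    using ab unfolding is_kernel_def hom_def by auto
  show "a \<in> Mor C" "b \<in> Mor C" "Dom C b = Cod C a" "zero_mor C (b \<cdot> a)"
    using ab unfolding is_kernel_def by simp_all
  have g: "g \<in> hom C (Dom C g) (Cod C a)" and bg_zero: "zero_mor C (b \<cdot> g)"
    using bg b unfolding is_cokernel_def hom_def by auto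
  obtain t where t: "t \<in> hom C (Dom C g) (Dom C a)" and at: "a \<cdot> t = g"
    using kernel_factors[OF ab b g bg_zero] .
  fix h assume h: "h \<in> Mor C" "Dom C h = Cod C a" and ha: "zero_mor C (h \<cdot> a)"
  have hh: "h \<in> hom C (Cod C a) (Cod C h)" using h by (simp add: hom_def)
  have "zero_mor C (h \<cdot> g)"
    using zero_mor_comp_right[OF ha comp_hom[OF a hh] t] comp_assoc[OF t a hh] at by simp
  moreover have "Dom C h = Cod C g" using h g by (simp add: hom_def)
  ultimately show "\<exists>!u. u \<in> hom C (Cod C b) (Cod C h) \<and> u \<cdot> b = h"
    using bg h(1) unfolding is_cokernel_def by blast
qed

end

locale category_with_kernels = category_with_zero +
  assumes kernel_exists: "f \<in> Mor C \<Longrightarrow> \<exists>k. is_kernel C k f"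
begin

lemma strongly_rickart_kernelE:
  assumes "strongly_rickart C M N" and f: "f \<in> hom C M N"
  obtains K k r where "is_kernel C k f" "fully_invariant C k" "k \<in> hom C K M"
    "r \<in> hom C M K" "r \<cdot> k = Id C K"
proof -
  obtain k where k: "is_kernel C k f" using kernel_exists f by (auto simp: hom_def)
  then have "fully_invariant C k" "is_section C k"
    using assms unfolding strongly_rickart_def by blast+
  moreover have "k \<in> hom C (Dom C k) M" using kernel_hom[OF k f] .
  ultimately show ?thesis using that k unfolding is_section_def hom_def by auto
qed

lemma strongly_rickart_extension:
  assumes ab: "is_kernel C a b"
    and SR1: "strongly_rickart C M (Dom C a)" and SR2: "strongly_rickart C M (Cod C b)"
  shows "strongly_rickart C M (Cod C a)"
  unfolding strongly_rickart_def
proof (intro ballI allI impI)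
  have b: "b \<in> hom C (Cod C a) (Cod C b)" and a: "a \<in> hom C (Dom C a) (Cod C a)"
    using ab unfolding is_kernel_def hom_def by auto
  fix f k assume f: "f \<in> hom C M (Cod C a)" and k: "is_kernel C k f"
  obtain K1 k1 r1 where k1: "is_kernel C k1 (b \<cdot> f)" and fi1: "fully_invariant C k1"
    and k1h: "k1 \<in> hom C K1 M" and r1: "r1 \<in> hom C M K1" and r1k1: "r1 \<cdot> k1 = Id C K1"
    using strongly_rickart_kernelE[OF SR2 comp_hom[OF f b]] .
  have "zero_mor C (b \<cdot> (f \<cdot> k1))"
    using kernel_zero[OF k1] comp_assoc[OF k1h f b] by simp
  then obtain g1 where g1: "g1 \<in> hom C K1 (Dom C a)" and ag1: "a \<cdot> g1 = f \<cdot> k1"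
    using kernel_factors[OF ab b comp_hom[OF k1h f]] by blast
  define g where "g = g1 \<cdot> r1"
  have g: "g \<in> hom C M (Dom C a)" unfolding g_def using comp_hom[OF r1 g1] .
  have fk1r1: "f \<cdot> (k1 \<cdot> r1) = a \<cdot> g"
    unfolding g_def using comp_assoc[OF r1 k1h f] comp_assoc[OF r1 g1 a] ag1 by simp
  obtain K2 k2 r2 where k2: "is_kernel C k2 g" and fi2: "fully_invariant C k2"
    and k2h: "k2 \<in> hom C K2 M" and r2: "r2 \<in> hom C M K2" and r2k2: "r2 \<cdot> k2 = Id C K2"
    using strongly_rickart_kernelE[OF SR1 g] .
  note killed_iff = zero_comp_iff_factors_through_both[OF ab a b f k1 k1h r1 r1k1 g fk1r1 k2]
  have kh: "k \<in> hom C (Dom C k) M" using kernel_hom[OF k f] .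
  have k_through: "factors_through C k1 k" "factors_through C k2 k"
    using killed_iff[OF kh] kernel_zero[OF k] by simp_all
  show "fully_invariant C k \<and> is_section C k"
  proof
    show "fully_invariant C k"
    proof (rule kernel_fully_invariantI[OF k f])
      fix h assume h: "h \<in> hom C M M"
      show "zero_mor C (f \<cdot> (h \<cdot> k))"
        using killed_iff[OF comp_hom[OF kh h]] k_through
          fully_invariant_factors_through_comp[OF fi1 k1h h kh]
          fully_invariant_factors_through_comp[OF fi2 k2h h kh] by simp
    qed
  next
    have e2: "k2 \<cdot> r2 \<in> hom C M M" using comp_hom[OF r2 k2h] .
    have e1: "k1 \<cdot> r1 \<in> hom C M M" using comp_hom[OF r1 k1h] .
    have "f \<cdot> ((k1 \<cdot> r1) \<cdot> (k2 \<cdot> r2)) = a \<cdot> ((g \<cdot> k2) \<cdot> r2)"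
      using comp_assoc[OF e2 e1 f] fk1r1 comp_assoc[OF e2 g a] comp_assoc[OF r2 k2h g] by simp
    moreover have "zero_mor C ((g \<cdot> k2) \<cdot> r2)"
      using zero_mor_comp_right[OF kernel_zero[OF k2] comp_hom[OF k2h g] r2] .
    ultimately have "zero_mor C (f \<cdot> ((k1 \<cdot> r1) \<cdot> (k2 \<cdot> r2)))"
      using zero_mor_comp_left[OF _ comp_hom[OF r2 comp_hom[OF k2h g]] a] by simp
    moreover have "((k1 \<cdot> r1) \<cdot> (k2 \<cdot> r2)) \<cdot> k = k"
      using comp_assoc[OF kh e2 e1]
        retraction_comp_fixes_factors_through[OF k2h r2 r2k2 kh k_through(2)]
        retraction_comp_fixes_factors_through[OF k1h r1 r1k1 kh k_through(1)] by simp
    ultimately show "is_section C k"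
      using kernel_is_sectionI[OF k f comp_hom[OF e2 e1]] by blast
  qed
qed

end

definition op_cat :: "('o, 'm) cat \<Rightarrow> ('o, 'm) cat" where
  "op_cat C = \<lparr>Obj = Obj C, Mor = Mor C, Dom = Cod C, Cod = Dom C,
     Comp = (\<lambda>g f. Comp C f g), Id = Id C\<rparr>"

lemma op_cat_simps [simp]:
  "Obj (op_cat C) = Obj C" "Mor (op_cat C) = Mor C" "Dom (op_cat C) = Cod C"
  "Cod (op_cat C) = Dom C" "Comp (op_cat C) g f = Comp C f g" "Id (op_cat C) = Id C"
  by (simp_all add: op_cat_def)

lemma hom_op_cat [simp]: "hom (op_cat C) X Y = hom C Y X"
  by (auto simp: hom_def)

lemma category_op_cat: "category C \<Longrightarrow> category (op_cat C)"
  unfolding category_def by (simp add: hom_def)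

lemma zero_obj_op_cat [simp]: "zero_obj (op_cat C) Z = zero_obj C Z"
  unfolding zero_obj_def by auto

lemma zero_mor_op_cat [simp]: "zero_mor (op_cat C) f = zero_mor C f"
  unfolding zero_mor_def by auto

lemma is_kernel_op_cat [simp]: "is_kernel (op_cat C) k f = is_cokernel C k f"
  unfolding is_kernel_def is_cokernel_def by simp

lemma mono_op_cat [simp]: "mono (op_cat C) f = epi C f"
  unfolding mono_def epi_def by auto

lemma is_section_op_cat [simp]: "is_section (op_cat C) k = is_retraction C k"
  unfolding is_section_def is_retraction_def by simp

lemma fully_invariant_op_cat [simp]: "fully_invariant (op_cat C) k = fully_coinvariant C k"
  unfolding fully_invariant_def fully_coinvariant_def by simp

lemma strongly_rickart_op_cat [simp]:
  "strongly_rickart (op_cat C) M N = dual_strongly_rickart C N M"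
  unfolding strongly_rickart_def dual_strongly_rickart_def by simp

lemma abelian_category_with_kernels: "abelian C \<Longrightarrow> category_with_kernels C"
  unfolding abelian_def by unfold_locales auto

lemma abelian_op_category_with_kernels: "abelian C \<Longrightarrow> category_with_kernels (op_cat C)"
  unfolding abelian_def by unfold_locales (auto simp: category_op_cat)

lemma short_exact_cokernel:
  assumes "abelian C" "short_exact C a b"
  shows "is_cokernel C b a"
proof -
  interpret category_with_kernels C using abelian_category_with_kernels[OF assms(1)] .
  have "\<forall>f. epi C f \<longrightarrow> (\<exists>g. is_cokernel C f g)" using assms(1) unfolding abelian_def by blast
  moreover have ab: "is_kernel C a b" "epi C b" using assms(2) unfolding short_exact_def by simp_all
  ultimately obtain g where "is_cokernel C b g" by blast
  then show ?thesis using cokernel_of_kernel[OF ab(1)] by blast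
qed

theorem theorem2p19:
  fixes C :: "('o, 'm) cat"
  assumes "abelian C"
  shows "(\<forall>a b M. short_exact C a b \<and> M \<in> Obj C \<and>
            strongly_rickart C M (Dom C a) \<and> strongly_rickart C M (Cod C b)
            \<longrightarrow> strongly_rickart C M (Cod C a))
       \<and> (\<forall>a b N. short_exact C a b \<and> N \<in> Obj C \<and>
            dual_strongly_rickart C (Dom C a) N \<and> dual_strongly_rickart C (Cod C b) N
            \<longrightarrow> dual_strongly_rickart C (Cod C a) N)"
proof (intro conjI allI impI)
  interpret category_with_kernels C using abelian_category_with_kernels[OF assms] .
  fix a b M
  assume h: "short_exact C a b \<and> M \<in> Obj C \<and>
    strongly_rickart C M (Dom C a) \<and> strongly_rickart C M (Cod C b)"
  then have "is_kernel C a b" unfolding short_exact_def by simp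
  then show "strongly_rickart C M (Cod C a)" using strongly_rickart_extension h by simp
next
  interpret op: category_with_kernels "op_cat C"
    using abelian_op_category_with_kernels[OF assms] .
  fix a b N
  assume h: "short_exact C a b \<and> N \<in> Obj C \<and>
    dual_strongly_rickart C (Dom C a) N \<and> dual_strongly_rickart C (Cod C b) N"
  then have "is_kernel (op_cat C) b a"
    using short_exact_cokernel[OF assms] by simp
  moreover have "Dom C b = Cod C a" using h unfolding short_exact_def by simp
  ultimately show "dual_strongly_rickart C (Cod C a) N"
    using op.strongly_rickart_extension[of b a N] h by simp
qed

end
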